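(* Let $\Gamma$ be the 3-hypergraph with vertex set $\mathbb{F}_7=\{0,1,\dots,6\}$ whose edges are the 14 triples $\{0,1,3\},\{0,2,6\},\{0,2,3\},\{0,4,5\},\{0,1,5\},\{0,4,6\},\{1,2,4\},\{2,3,5\},\{3,4,6\},\{1,5,6\},\{1,3,4\},\{2,4,5\},\{3,5,6\},\{1,2,6\}$ (this is one of the two orbits of $\mathrm{AGL}_1(7)=\{x\mapsto ax+b: a\in\mathbb{F}_7^*,b\in\mathbb{F}_7\}$ on 3-subsets). Then $\Gamma$ is set-homogeneous but not homogeneous.
   Context: A 3-hypergraph is a pair $(X,E)$ with $E$ a set of 3-element subsets (edges). It is set-homogeneous if for every $t\ge1$, whenever $U,V\subseteq X$ with $|U|=|V|=t$ carry isomorphic induced subhypergraphs there is an automorphism $g$ with $U^g=V$; homogeneous if every isomorphism between induced subhypergraphs extends to an automorphism. *)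

theory Defs
  imports Main
begin

definition hypergraph3 :: "'a set \<Rightarrow> 'a set set \<Rightarrow> bool" where
  "hypergraph3 X E \<longleftrightarrow> (\<forall>e\<in>E. e \<subseteq> X \<and> card e = 3)"

definition induced_iso :: "'a set \<Rightarrow> 'a set set \<Rightarrow> 'a set \<Rightarrow> 'a set \<Rightarrow> ('a \<Rightarrow> 'a) \<Rightarrow> bool" where
  "induced_iso X E U V f \<longleftrightarrow> U \<subseteq> X \<and> V \<subseteq> X \<and> bij_betw f U V \<and>
     (\<forall>e. e \<subseteq> U \<longrightarrow> (e \<in> E \<longleftrightarrow> f ` e \<in> E))"

definition hg_automorphism :: "'a set \<Rightarrow> 'a set set \<Rightarrow> ('a \<Rightarrow> 'a) \<Rightarrow> bool" where
  "hg_automorphism X E g \<longleftrightarrow> induced_iso X E X X g"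

definition set_homogeneous :: "'a set \<Rightarrow> 'a set set \<Rightarrow> bool" where
  "set_homogeneous X E \<longleftrightarrow>
     (\<forall>t\<ge>1. \<forall>U V. U \<subseteq> X \<and> V \<subseteq> X \<and> finite U \<and> finite V \<and> card U = t \<and> card V = t \<and>
        (\<exists>f. induced_iso X E U V f) \<longrightarrow> (\<exists>g. hg_automorphism X E g \<and> g ` U = V))"

definition homogeneous :: "'a set \<Rightarrow> 'a set set \<Rightarrow> bool" where
  "homogeneous X E \<longleftrightarrow>
     (\<forall>U V f. finite U \<and> induced_iso X E U V f \<longrightarrow>
        (\<exists>g. hg_automorphism X E g \<and> (\<forall>x\<in>U. g x = f x)))"

definition Gamma_V :: "nat set" where
  "Gamma_V = {0..6}"

definition Gamma_E :: "nat set set" where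
  "Gamma_E = {{0,1,3},{0,2,6},{0,2,3},{0,4,5},{0,1,5},{0,4,6},{1,2,4},{2,3,5},{3,4,6},
              {1,5,6},{1,3,4},{2,4,5},{3,5,6},{1,2,6}}"

end

theory Submission
  imports Defs
begin

text \<open>
  The affine maps \<open>x \<mapsto> a x + b\<close> of \<open>\<bbbF>\<^sub>7\<close> are automorphisms of \<open>\<Gamma>\<close>, and a finite
  check shows that two subsets of \<open>\<bbbF>\<^sub>7\<close> lie in the same orbit of \<open>AGL\<^sub>1(7)\<close> as soon as they
  have the same size and contain the same number of edges. Since an isomorphism of induced
  subhypergraphs preserves both quantities, \<open>\<Gamma>\<close> is set-homogeneous. It is not homogeneous:
  the transposition of \<open>0\<close> and \<open>1\<close> fixing \<open>2\<close> is an isomorphism of the edgeless triple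
  \<open>{0,1,2}\<close>, but an extension \<open>g\<close> would send the edges \<open>{0,1,3}\<close>, \<open>{0,2,3}\<close> to edges
  \<open>{1,0,g 3}\<close>, \<open>{1,2,g 3}\<close>, and no vertex completes both \<open>{0,1}\<close> and \<open>{1,2}\<close> to an edge.
\<close>

definition edge_count :: "'a set set \<Rightarrow> 'a set \<Rightarrow> nat" where
  "edge_count E U = card {e \<in> E. e \<subseteq> U}"

lemma induced_iso_edge_count:
  assumes "induced_iso X E U V f"
  shows "edge_count E U = edge_count E V"
proof -
  have inj: "inj_on f U" and im: "f ` U = V" and edges: "\<And>e. e \<subseteq> U \<Longrightarrow> e \<in> E \<longleftrightarrow> f ` e \<in> E"
    using assms unfolding induced_iso_def bij_betw_def by blast+
  have "inj_on (image f) {e \<in> E. e \<subseteq> U}"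
    by (rule inj_on_subset[OF inj_on_image_Pow[OF inj]]) blast
  moreover have "image f ` {e \<in> E. e \<subseteq> U} = {e \<in> E. e \<subseteq> V}"
  proof (intro equalityI subsetI)
    fix e' assume "e' \<in> {e \<in> E. e \<subseteq> V}"
    then obtain e where "e \<subseteq> U" "e' = f ` e" "e' \<in> E"
      using im subset_image_iff[of e' f U] by auto
    then show "e' \<in> image f ` {e \<in> E. e \<subseteq> U}" using edges by blast
  qed (use edges im in auto)
  ultimately show ?thesis
    unfolding edge_count_def by (metis card_image)
qed

lemma hg_automorphism_comp:
  assumes "hg_automorphism X E g" "hg_automorphism X E h"
  shows "hg_automorphism X E (h \<circ> g)"
proof -
  have g: "bij_betw g X X" "\<And>e. e \<subseteq> X \<Longrightarrow> e \<in> E \<longleftrightarrow> g ` e \<in> E"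
    and h: "bij_betw h X X" "\<And>e. e \<subseteq> X \<Longrightarrow> e \<in> E \<longleftrightarrow> h ` e \<in> E"
    using assms unfolding hg_automorphism_def induced_iso_def by auto
  have "e \<in> E \<longleftrightarrow> (h \<circ> g) ` e \<in> E" if "e \<subseteq> X" for e
  proof -
    have "g ` e \<subseteq> X" using g(1) that by (auto simp: bij_betw_def)
    then show ?thesis using g(2)[OF that] h(2) by (simp add: image_comp)
  qed
  then show ?thesis
    unfolding hg_automorphism_def induced_iso_def using bij_betw_trans[OF g(1) h(1)] by simp
qed

lemma hg_automorphism_inv_into:
  assumes "hg_automorphism X E g"
  shows "hg_automorphism X E (inv_into X g)"
proof -
  have g: "bij_betw g X X" "\<And>e. e \<subseteq> X \<Longrightarrow> e \<in> E \<longleftrightarrow> g ` e \<in> E"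
    using assms unfolding hg_automorphism_def induced_iso_def by auto
  have "e \<in> E \<longleftrightarrow> inv_into X g ` e \<in> E" if "e \<subseteq> X" for e
  proof -
    have "inv_into X g ` e \<subseteq> X"
      using that bij_betw_imp_surj_on[OF bij_betw_inv_into[OF g(1)]] by blast
    moreover have "g ` inv_into X g ` e = e"
      using that g(1) by (simp add: bij_betw_def image_inv_into_cancel)
    ultimately show ?thesis using g(2)[of "inv_into X g ` e"] by simp
  qed
  then show ?thesis
    unfolding hg_automorphism_def induced_iso_def using bij_betw_inv_into[OF g(1)] by simp
qed

definition edge_preserving :: "'a set \<Rightarrow> 'a set set \<Rightarrow> ('a \<Rightarrow> 'a) \<Rightarrow> bool" where
  "edge_preserving X E g \<longleftrightarrow> g ` X = X \<and> (\<forall>e\<in>E. g ` e \<in> E)"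

lemma hg_automorphismI:
  assumes "finite X" "finite E" "\<forall>e\<in>E. e \<subseteq> X" "edge_preserving X E g"
  shows "hg_automorphism X E g"
proof -
  have onto: "g ` X = X" and edges: "\<forall>e\<in>E. g ` e \<in> E"
    using assms(4) unfolding edge_preserving_def by auto
  then have bij: "bij_betw g X X"
    using assms(1) by (simp add: bij_betw_def eq_card_imp_inj_on)
  then have inj: "inj_on (image g) (Pow X)"
    by (simp add: bij_betw_def inj_on_image_Pow)
  then have "inj_on (image g) E"
    using assms(3) by (blast intro: inj_on_subset)
  then have onto_E: "image g ` E = E"
    using endo_inj_surj[OF assms(2)] edges by blast
  have "e \<in> E" if e: "e \<subseteq> X" "g ` e \<in> E" for e
  proof -
    obtain e' where e': "e' \<in> E" "g ` e = g ` e'" using onto_E e(2) by (metis imageE)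
    then have "e = e'" using inj_onD[OF inj e'(2)] e(1) assms(3) by blast
    then show ?thesis using e'(1) by simp
  qed
  then show ?thesis
    unfolding hg_automorphism_def induced_iso_def using bij edges by auto
qed

lemma set_homogeneous_if_canonical_forms:
  assumes "\<And>U. U \<subseteq> X \<Longrightarrow> finite U \<Longrightarrow>
    \<exists>g. hg_automorphism X E g \<and> g ` U = canon (card U) (edge_count E U)"
  shows "set_homogeneous X E"
  unfolding set_homogeneous_def
proof (intro allI impI)
  fix t U V
  assume "U \<subseteq> X \<and> V \<subseteq> X \<and> finite U \<and> finite V \<and> card U = t \<and> card V = t \<and>
    (\<exists>f. induced_iso X E U V f)"
  then have UV: "U \<subseteq> X" "V \<subseteq> X" "finite U" "finite V" "card U = card V"
    "edge_count E U = edge_count E V"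
    using induced_iso_edge_count by auto
  obtain g where g: "hg_automorphism X E g" "g ` U = canon (card U) (edge_count E U)"
    using assms UV(1,3) by blast
  obtain h where h: "hg_automorphism X E h" "h ` V = canon (card V) (edge_count E V)"
    using assms UV(2,4) by blast
  have "inj_on h X" using h(1) by (simp add: hg_automorphism_def induced_iso_def bij_betw_def)
  then have "inv_into X h ` h ` V = V" using UV(2) by (rule inv_into_image_cancel)
  then have "inv_into X h ` g ` U = V" using g(2) h(2) UV(5,6) by simp
  then have "(inv_into X h \<circ> g) ` U = V" by (simp add: image_comp)
  then show "\<exists>g. hg_automorphism X E g \<and> g ` U = V"
    using hg_automorphism_comp[OF g(1) hg_automorphism_inv_into[OF h(1)]] by blast
qed

lemma induced_iso_edgeless:
  assumes "U \<subseteq> X" "bij_betw f U U" "\<forall>e\<in>E. \<not> e \<subseteq> U"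
  shows "induced_iso X E U U f"
proof -
  have "e \<notin> E \<and> f ` e \<notin> E" if "e \<subseteq> U" for e
    using that image_mono[OF that, of f] assms(2,3) by (auto simp: bij_betw_def)
  then show ?thesis using assms(1,2) unfolding induced_iso_def by blast
qed

definition affine7 :: "nat \<Rightarrow> nat \<Rightarrow> nat \<Rightarrow> nat" where
  "affine7 a b x = (a * x + b) mod 7"

definition affine7_maps :: "(nat \<Rightarrow> nat) list" where
  "affine7_maps = [affine7 a b. a \<leftarrow> [1..<7], b \<leftarrow> [0..<7]]"

text \<open>One representative for each orbit of \<open>AGL\<^sub>1(7)\<close> on subsets of \<open>\<bbbF>\<^sub>7\<close>; only the
  sizes 3 and 4 split into two orbits, told apart by the number of edges.\<close>

definition Gamma_canon :: "nat \<Rightarrow> nat \<Rightarrow> nat set" where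
  "Gamma_canon k m = (if k = 3 \<and> m = 1 then {0,1,3} else if k = 4 \<and> m = 1 then {0,1,2,4} else {0..<k})"

lemma Gamma_hypergraph3: "hypergraph3 Gamma_V Gamma_E"
  unfolding hypergraph3_def by code_simp

lemma affine7_maps_edge_preserving: "list_all (edge_preserving Gamma_V Gamma_E) affine7_maps"
  by code_simp

lemma affine7_hg_automorphism:
  assumes "f \<in> set affine7_maps"
  shows "hg_automorphism Gamma_V Gamma_E f"
proof (rule hg_automorphismI)
  show "edge_preserving Gamma_V Gamma_E f"
    using affine7_maps_edge_preserving assms by (simp add: list_all_iff)
  show "\<forall>e\<in>Gamma_E. e \<subseteq> Gamma_V" using Gamma_hypergraph3 by (simp add: hypergraph3_def)
qed (simp_all add: Gamma_V_def Gamma_E_def)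

text \<open>Phrased with \<open>find\<close> so that evaluation stops at the first witness.\<close>

lemma Gamma_canon_search:
  "list_all (\<lambda>U. find (\<lambda>f. f ` U = Gamma_canon (card U) (edge_count Gamma_E U)) affine7_maps \<noteq> None)
     (map set (subseqs [0..<7]))"
  by code_simp

lemma Gamma_canonical_forms:
  assumes "U \<subseteq> Gamma_V"
  shows "\<exists>g. hg_automorphism Gamma_V Gamma_E g \<and> g ` U = Gamma_canon (card U) (edge_count Gamma_E U)"
proof -
  have "Gamma_V = set [0..<7]" by (auto simp: Gamma_V_def)
  then have "U \<in> set ` set (subseqs [0..<7])"
    using assms by (simp only: subseqs_powset Pow_iff)
  then have "find (\<lambda>f. f ` U = Gamma_canon (card U) (edge_count Gamma_E U)) affine7_maps \<noteq> None"
    by (rule bspec[OF Gamma_canon_search[unfolded list_all_iff set_map]])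
  then obtain f where "f \<in> set affine7_maps" "f ` U = Gamma_canon (card U) (edge_count Gamma_E U)"
    unfolding find_None_iff by blast
  then show ?thesis using affine7_hg_automorphism by blast
qed

lemma Gamma_set_homogeneous: "set_homogeneous Gamma_V Gamma_E"
  using Gamma_canonical_forms by (rule set_homogeneous_if_canonical_forms)

lemma Gamma_no_edge_in_012: "\<forall>e\<in>Gamma_E. \<not> e \<subseteq> {0, 1, 2}"
  by code_simp

lemma Gamma_no_common_completion: "\<forall>k\<in>Gamma_V. \<not> ({0, 1, k} \<in> Gamma_E \<and> {1, 2, k} \<in> Gamma_E)"
  by code_simp

lemma Gamma_not_homogeneous: "\<not> homogeneous Gamma_V Gamma_E"
proof
  assume hom: "homogeneous Gamma_V Gamma_E"
  let ?U = "{0, 1, 2 :: nat}" and ?f = "id(0 := 1, 1 := 0) :: nat \<Rightarrow> nat"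
  have "bij_betw ?f ?U ?U" by (simp add: bij_betw_def inj_on_def insert_commute)
  moreover have "?U \<subseteq> Gamma_V" by (simp add: Gamma_V_def)
  ultimately have "induced_iso Gamma_V Gamma_E ?U ?U ?f"
    using induced_iso_edgeless Gamma_no_edge_in_012 by blast
  moreover have "finite ?U" by simp
  ultimately obtain g where g: "hg_automorphism Gamma_V Gamma_E g" "\<forall>x\<in>?U. g x = ?f x"
    using hom unfolding homogeneous_def by blast
  then have edge: "\<And>e. e \<subseteq> Gamma_V \<Longrightarrow> e \<in> Gamma_E \<Longrightarrow> g ` e \<in> Gamma_E"
    and "g ` Gamma_V = Gamma_V"
    unfolding hg_automorphism_def induced_iso_def bij_betw_def by auto
  moreover have "(3 :: nat) \<in> Gamma_V" by (simp add: Gamma_V_def)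
  ultimately have "g 3 \<in> Gamma_V" by blast
  have "{0, 1, 3} \<in> Gamma_E" "{0, 2, 3} \<in> Gamma_E" by code_simp+
  moreover have "{0, 1, 3} \<subseteq> Gamma_V" "{0, 2, 3} \<subseteq> Gamma_V" by (auto simp: Gamma_V_def)
  ultimately have "g ` {0, 1, 3} \<in> Gamma_E" "g ` {0, 2, 3} \<in> Gamma_E" using edge by blast+
  moreover have "g ` {0, 1, 3} = {0, 1, g 3}" "g ` {0, 2, 3} = {1, 2, g 3}" using g(2) by auto
  ultimately show False using Gamma_no_common_completion \<open>g 3 \<in> Gamma_V\<close> by auto
qed

theorem mainTheorem16:
  shows "hypergraph3 Gamma_V Gamma_E \<and> set_homogeneous Gamma_V Gamma_E \<and> \<not> homogeneous Gamma_V Gamma_E"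
  using Gamma_hypergraph3 Gamma_set_homogeneous Gamma_not_homogeneous by blast

end
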